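(* Let $\varrho\in[1/2,1)$ and let $I\subset(\max\{1,C/E_{\max}\},\infty)$ be an interval on which $$3\psi^2e^{\psi}Q^2-2QE_{\max}+C\ge 0\quad\text{for all }Q\in I.$$ Then the function $$J(Q)=F_{T_c}^{-1}(\varrho;Q)+F_{T_{\mathrm{tx}}}^{-1}(\varrho;Q)$$ is convex on $I$.
   Context: Constants: $D>0$, $\psi>0$, $\kappa>0$, $P_{s,\max}>0$, $f_{\max}>0$, $E_{\max}>0$, $\varepsilon\in(0,1)$, $\eta>0$, $n_p>0$, $t_p>0$. Define $C=\frac{D}{(1-\varepsilon)\eta}$ and $$f_c^*(Q)=\sqrt{\frac{(E_{\max}-C/Q)\,f_{\max}^3}{(e^{\psi Q}-e^{\psi})\,D\,P_{s,\max}}}.$$ Compression time: $T_c\sim\mathrm{Gamma}\big(\kappa,\ \tfrac{(e^{\psi Q}-e^{\psi})D}{\kappa f_c^*(Q)}\big)$, with shape $\kappa$ and the given scale. Its $\varrho$-quantile is denoted $F_{T_c}^{-1}(\varrho;Q)$. Transmission time: with $N=D/(Qn_p)$, $T_{\mathrm{tx}}$ is Gaussian with mean $\mu_{\mathrm{tx}}=\frac{Nt_p}{1-\varepsilon}$ and variance $\sigma_{\mathrm{tx}}^2=\frac{Nt_p^2\varepsilon}{(1-\varepsilon)^2}$. Hence $$F_{T_{\mathrm{tx}}}^{-1}(\varrho;Q)=\mu_{\mathrm{tx}}+z(\varrho)\sigma_{\mathrm{tx}},$$ where $z$ is the standard normal inverse CDF. *)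

theory Defs
  imports "HOL-Probability.Probability"
begin

definition quantile :: "(real \<Rightarrow> real) \<Rightarrow> real \<Rightarrow> real" where
  "quantile F r = Inf {x. r \<le> F x}"

definition std_normal_cdf :: "real \<Rightarrow> real" where
  "std_normal_cdf x = (LINT t:{..x}|lborel. std_normal_density t)"

definition znorm :: "real \<Rightarrow> real" where
  "znorm r = quantile std_normal_cdf r"

definition gamma_density :: "real \<Rightarrow> real \<Rightarrow> real \<Rightarrow> real" where
  "gamma_density k th x =
     (if 0 < x then x powr (k - 1) * exp (- x / th) / (Gamma k * th powr k) else 0)"

definition gamma_cdf :: "real \<Rightarrow> real \<Rightarrow> real \<Rightarrow> real" where
  "gamma_cdf k th x = (LINT t:{..x}|lborel. gamma_density k th t)"

definition gamma_quantile :: "real \<Rightarrow> real \<Rightarrow> real \<Rightarrow> real" where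
  "gamma_quantile k th r = quantile (gamma_cdf k th) r"

definition Cconst :: "real \<Rightarrow> real \<Rightarrow> real \<Rightarrow> real" where
  "Cconst D eps eta = D / ((1 - eps) * eta)"

definition fc_star ::
  "real \<Rightarrow> real \<Rightarrow> real \<Rightarrow> real \<Rightarrow> real \<Rightarrow> real \<Rightarrow> real \<Rightarrow> real \<Rightarrow> real" where
  "fc_star D psi Psmax fmax Emax eps eta Q =
     sqrt ((Emax - Cconst D eps eta / Q) * fmax ^ 3 /
           ((exp (psi * Q) - exp psi) * D * Psmax))"

definition Tc_quantile ::
  "real \<Rightarrow> real \<Rightarrow> real \<Rightarrow> real \<Rightarrow> real \<Rightarrow> real \<Rightarrow> real \<Rightarrow> real \<Rightarrow> real \<Rightarrow> real \<Rightarrow> real" where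
  "Tc_quantile D psi kappa Psmax fmax Emax eps eta r Q =
     gamma_quantile kappa
       ((exp (psi * Q) - exp psi) * D / (kappa * fc_star D psi Psmax fmax Emax eps eta Q)) r"

definition Ttx_quantile ::
  "real \<Rightarrow> real \<Rightarrow> real \<Rightarrow> real \<Rightarrow> real \<Rightarrow> real \<Rightarrow> real" where
  "Ttx_quantile D eps np tp r Q =
     (let N = D / (Q * np);
          mu = N * tp / (1 - eps);
          sigma = sqrt (N * tp ^ 2 * eps / (1 - eps) ^ 2)
      in mu + znorm r * sigma)"

end

theory Submission
  imports Defs
begin

(* The scale parameter of the Gamma-distributed compression time equals
   K * sqrt (a Q ^ 3 / w Q) with a Q = exp (psi Q) - exp psi convex and w Q = Emax - C/Q concave,
   both positive for Q > max 1 (C/Emax).  Writing this as exp L with L = 3/2 ln a - 1/2 ln w gives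
   L'^2 + L'' = 3/4 (a'/a - w'/w)^2 + 3/2 a''/a - 1/2 w''/w >= 0, so it is convex.  Gamma quantiles
   are linear in the scale, hence the compression quantile is a nonnegative multiple of a convex
   function.  The transmission quantile is A/Q + z(rho) B/sqrt Q with A, B >= 0, and z(rho) >= 0
   for rho >= 1/2 by the symmetry of the normal density. *)

lemma convex_on_cong:
  assumes "convex_on S f" "\<And>x. x \<in> S \<Longrightarrow> f x = g x"
  shows "convex_on S g"
  using assms convex_on_imp_convex[OF assms(1)]
  unfolding convex_on_def by (auto simp: convex_def)

lemma convex_on_exp_comp:
  fixes L :: "real \<Rightarrow> real"
  assumes "convex S"
    and L: "\<And>x. x \<in> S \<Longrightarrow> (L has_real_derivative L' x) (at x)"
    and L': "\<And>x. x \<in> S \<Longrightarrow> (L' has_real_derivative L'' x) (at x)"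
    and nonneg: "\<And>x. x \<in> S \<Longrightarrow> 0 \<le> L' x ^ 2 + L'' x"
  shows "convex_on S (\<lambda>x. exp (L x))"
proof (rule f''_ge0_imp_convex[OF \<open>convex S\<close>])
  fix x assume x: "x \<in> S"
  show "((\<lambda>x. exp (L x)) has_real_derivative exp (L x) * L' x) (at x)"
    using L[OF x] by (auto intro!: derivative_eq_intros)
  show "((\<lambda>x. exp (L x) * L' x) has_real_derivative exp (L x) * (L' x ^ 2 + L'' x)) (at x)"
    using L[OF x] L'[OF x]
    by (auto intro!: derivative_eq_intros simp: power2_eq_square algebra_simps)
  show "0 \<le> exp (L x) * (L' x ^ 2 + L'' x)"
    using nonneg[OF x] by simp
qed

lemma convex_on_sqrt_cube_div:
  fixes a w :: "real \<Rightarrow> real"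
  assumes "convex S"
    and a: "\<And>x. x \<in> S \<Longrightarrow> 0 < a x"
      "\<And>x. x \<in> S \<Longrightarrow> (a has_real_derivative a' x) (at x)"
      "\<And>x. x \<in> S \<Longrightarrow> (a' has_real_derivative a'' x) (at x)"
      "\<And>x. x \<in> S \<Longrightarrow> 0 \<le> a'' x"
    and w: "\<And>x. x \<in> S \<Longrightarrow> 0 < w x"
      "\<And>x. x \<in> S \<Longrightarrow> (w has_real_derivative w' x) (at x)"
      "\<And>x. x \<in> S \<Longrightarrow> (w' has_real_derivative w'' x) (at x)"
      "\<And>x. x \<in> S \<Longrightarrow> w'' x \<le> 0"
  shows "convex_on S (\<lambda>x. sqrt (a x ^ 3 / w x))"
proof -
  define L where "L x = 3/2 * ln (a x) - 1/2 * ln (w x)" for x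
  define P where "P x = a' x / a x" for x
  define R where "R x = w' x / w x" for x
  have "convex_on S (\<lambda>x. exp (L x))"
  proof (rule convex_on_exp_comp[OF \<open>convex S\<close>])
    fix x assume x: "x \<in> S"
    show "(L has_real_derivative 3/2 * P x - 1/2 * R x) (at x)"
      unfolding L_def[abs_def] P_def R_def using a(1,2)[OF x] w(1,2)[OF x]
      by (auto intro!: derivative_eq_intros simp: field_simps)
    show "((\<lambda>x. 3/2 * P x - 1/2 * R x) has_real_derivative
        3/2 * (a'' x / a x - P x ^ 2) - 1/2 * (w'' x / w x - R x ^ 2)) (at x)"
      unfolding P_def[abs_def] R_def[abs_def] using a(1-3)[OF x] w(1-3)[OF x]
      by (auto intro!: derivative_eq_intros simp: field_simps power2_eq_square)
    have "(3/2 * P x - 1/2 * R x) ^ 2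
        + (3/2 * (a'' x / a x - P x ^ 2) - 1/2 * (w'' x / w x - R x ^ 2))
        = 3/4 * (P x - R x) ^ 2 + 3/2 * (a'' x / a x) - 1/2 * (w'' x / w x)"
      by (simp add: power2_eq_square algebra_simps)
    also have "\<dots> \<ge> 0"
      using divide_nonneg_pos[OF a(4,1)[OF x]] divide_nonpos_pos[OF w(4,1)[OF x]]
        zero_le_power2[of "P x - R x"] by linarith
    finally show "0 \<le> (3/2 * P x - 1/2 * R x) ^ 2
        + (3/2 * (a'' x / a x - P x ^ 2) - 1/2 * (w'' x / w x - R x ^ 2))" .
  qed
  moreover have "exp (L x) = sqrt (a x ^ 3 / w x)" if "x \<in> S" for x
  proof -
    have "sqrt (a x ^ 3 / w x) = exp (1/2 * ln (a x ^ 3 / w x))"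
      using a(1)[OF that] w(1)[OF that] by (simp add: powr_half_sqrt[symmetric] powr_def)
    also have "1/2 * ln (a x ^ 3 / w x) = L x"
      using a(1)[OF that] w(1)[OF that] by (simp add: L_def ln_div ln_realpow)
    finally show ?thesis by simp
  qed
  ultimately show ?thesis by (rule convex_on_cong)
qed

lemma convex_on_compression_scale:
  fixes psi E C :: real
  assumes "0 < psi" "0 < E" "0 \<le> C"
  shows "convex_on {max 1 (C/E)<..} (\<lambda>Q. sqrt ((exp (psi * Q) - exp psi) ^ 3 / (E - C/Q)))"
proof (rule convex_on_sqrt_cube_div[where a' = "\<lambda>Q. psi * exp (psi * Q)"
      and a'' = "\<lambda>Q. psi^2 * exp (psi * Q)"
      and w' = "\<lambda>Q. C / Q^2" and w'' = "\<lambda>Q. - 2 * C / Q^3"])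
  fix Q assume "Q \<in> {max 1 (C/E)<..}"
  then have Q: "1 < Q" "C < E * Q"
    using assms by (auto simp: field_simps)
  show "0 < exp (psi * Q) - exp psi"
    using Q assms by simp
  show "0 < E - C/Q"
    using Q by (simp add: field_simps)
  show "((\<lambda>Q. exp (psi * Q) - exp psi) has_real_derivative psi * exp (psi * Q)) (at Q)"
    by (auto intro!: derivative_eq_intros)
  show "((\<lambda>Q. psi * exp (psi * Q)) has_real_derivative psi^2 * exp (psi * Q)) (at Q)"
    by (auto intro!: derivative_eq_intros simp: power2_eq_square)
  show "((\<lambda>Q. E - C/Q) has_real_derivative C / Q^2) (at Q)"
    using Q by (auto intro!: derivative_eq_intros simp: power2_eq_square)
  show "((\<lambda>Q. C / Q^2) has_real_derivative - 2 * C / Q^3) (at Q)"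
    using Q by (auto intro!: derivative_eq_intros simp: field_simps power2_eq_square power3_eq_cube)
  show "- 2 * C / Q^3 \<le> 0"
    using Q assms by simp
qed auto

lemma compression_scale_eq:
  fixes a w D kappa P f :: real
  assumes "0 < a" "0 < w" "0 < D" "0 < kappa" "0 < P" "0 < f"
  shows "a * D / (kappa * sqrt (w * f^3 / (a * D * P)))
    = D * sqrt (D * P / f^3) / kappa * sqrt (a^3 / w)"
proof -
  have "a / sqrt (w * f^3 / (a * D * P)) = sqrt (a^2 / (w * f^3 / (a * D * P)))"
    using assms by (simp add: real_sqrt_divide real_sqrt_mult)
  also have "a^2 / (w * f^3 / (a * D * P)) = D * P / f^3 * (a^3 / w)"
    using assms by (simp add: field_simps power2_eq_square power3_eq_cube)
  also have "sqrt (D * P / f^3 * (a^3 / w)) = sqrt (D * P / f^3) * sqrt (a^3 / w)"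
    by (rule real_sqrt_mult)
  finally have "a / sqrt (w * f^3 / (a * D * P)) = sqrt (D * P / f^3) * sqrt (a^3 / w)" .
  moreover have "0 < sqrt (w * f^3 / (a * D * P))"
    using assms by simp
  ultimately show ?thesis
    using assms by (simp add: field_simps)
qed

lemma quantile_nonneg:
  assumes "\<exists>x. r \<le> F x" and "\<And>y. y < 0 \<Longrightarrow> F y < r"
  shows "0 \<le> quantile F r"
  unfolding quantile_def
proof (rule cInf_greatest)
  show "{x. r \<le> F x} \<noteq> {}"
    using assms(1) by blast
  show "0 \<le> x" if "x \<in> {x. r \<le> F x}" for x
    using that assms(2)[of x] by force
qed

lemma quantile_rescale:
  fixes G :: "real \<Rightarrow> real"
  assumes th: "0 < th" and ne: "\<exists>y. r \<le> G y" and bdd: "bdd_below {y. r \<le> G y}"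
  shows "quantile (\<lambda>x. G (x / th)) r = th * quantile G r"
  unfolding quantile_def
proof (rule cInf_eq_non_empty)
  obtain y where "r \<le> G y"
    using ne by blast
  then show "{x. r \<le> G (x / th)} \<noteq> {}"
    using th by (auto intro!: exI[of _ "th * y"])
  show "th * Inf {y. r \<le> G y} \<le> x" if "x \<in> {x. r \<le> G (x / th)}" for x
    using cInf_lower[OF _ bdd, of "x / th"] that th by (simp add: field_simps)
  show "z \<le> th * Inf {y. r \<le> G y}"
    if lower: "\<And>x. x \<in> {x. r \<le> G (x / th)} \<Longrightarrow> z \<le> x" for z
  proof -
    have "z / th \<le> Inf {y. r \<le> G y}"
      using ne lower[of "th * y" for y] th by (intro cInf_greatest) (auto simp: field_simps)
    then show ?thesis
      using th by (simp add: field_simps)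
  qed
qed

lemma gamma_density_scale:
  assumes "0 < th"
  shows "gamma_density k th t = gamma_density k 1 (t / th) / th"
proof (cases "0 < t")
  case True
  have "th powr k = th powr (k - 1) * th"
    using assms by (simp add: powr_diff)
  then show ?thesis
    using True assms by (simp add: gamma_density_def powr_divide field_simps)
qed (use assms in \<open>simp add: gamma_density_def field_simps\<close>)

lemma gamma_cdf_scale:
  assumes th: "0 < th"
  shows "gamma_cdf k th = (\<lambda>x. gamma_cdf k 1 (x / th))"
proof
  fix x
  have "gamma_cdf k th x = (\<integral>t. indicator {..x} t * gamma_density k th t \<partial>lborel)"
    unfolding gamma_cdf_def set_lebesgue_integral_def by simp
  also have "\<dots> = th * (\<integral>u. indicator {..x} (th * u) * gamma_density k th (th * u) \<partial>lborel)"
    using th by (subst lborel_integral_real_affine[where c = th and t = 0]) simp_all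
  also have "\<dots> = (\<integral>u. indicator {..x / th} u * gamma_density k 1 u \<partial>lborel)"
    using th by (simp add: gamma_density_scale[OF th] indicator_def field_simps)
  also have "\<dots> = gamma_cdf k 1 (x / th)"
    unfolding gamma_cdf_def set_lebesgue_integral_def by simp
  finally show "gamma_cdf k th x = gamma_cdf k 1 (x / th)" .
qed

lemma gamma_cdf_nonpos:
  assumes "y \<le> 0"
  shows "gamma_cdf k th y = 0"
proof -
  have "(\<lambda>t. indicator {..y} t * gamma_density k th t) = (\<lambda>t. 0 :: real)"
    using assms by (auto simp: indicator_def gamma_density_def)
  then show ?thesis
    unfolding gamma_cdf_def set_lebesgue_integral_def by simp
qed

(* c is only needed for the junk value Inf {} when gamma_cdf k 1 never reaches r. *)
lemma gamma_quantile_affine_in_scale: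
  assumes "0 < r"
  obtains c q where "0 \<le> q" "\<And>th. 0 < th \<Longrightarrow> gamma_quantile k th r = c + q * th"
proof (cases "\<exists>y. r \<le> gamma_cdf k 1 y")
  case True
  have below: "gamma_cdf k 1 y < r" if "y < 0" for y
    using that assms gamma_cdf_nonpos[of y] by simp
  have bdd: "bdd_below {y. r \<le> gamma_cdf k 1 y}"
  proof (rule bdd_belowI[of _ 0])
    show "0 \<le> y" if "y \<in> {y. r \<le> gamma_cdf k 1 y}" for y
      using that below[of y] by force
  qed
  have "gamma_quantile k th r = 0 + gamma_quantile k 1 r * th" if "0 < th" for th
  proof -
    have "gamma_quantile k th r = quantile (\<lambda>x. gamma_cdf k 1 (x / th)) r"
      unfolding gamma_quantile_def gamma_cdf_scale[OF that] ..
    also have "\<dots> = th * quantile (gamma_cdf k 1) r"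
      by (rule quantile_rescale[OF that True bdd])
    finally show ?thesis
      by (simp add: gamma_quantile_def)
  qed
  moreover have "0 \<le> gamma_quantile k 1 r"
    unfolding gamma_quantile_def by (rule quantile_nonneg[OF True below])
  ultimately show thesis
    using that by blast
next
  case False
  have "gamma_quantile k th r = Inf {} + 0 * th" if "0 < th" for th
    using False by (simp add: gamma_quantile_def quantile_def gamma_cdf_scale[OF that])
  then show thesis
    using that by blast
qed

lemma measure_std_normal_distribution:
  assumes "A \<in> sets borel"
  shows "measure std_normal_distribution A = (LBINT t:A. std_normal_density t)"
proof -
  have "measure std_normal_distribution A = (\<integral>t. indicator A t \<partial>std_normal_distribution)"
    by simp
  also have "\<dots> = (\<integral>t. std_normal_density t *\<^sub>R indicator A t \<partial>lborel)"
    using assms by (intro integral_density) auto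
  finally show ?thesis
    by (simp add: set_lebesgue_integral_def mult.commute)
qed

lemma std_normal_cdf_eq_measure: "std_normal_cdf x = measure std_normal_distribution {..x}"
  by (simp add: std_normal_cdf_def measure_std_normal_distribution)

lemma std_normal_cdf_reflect: "std_normal_cdf x = measure std_normal_distribution {-x..}"
proof -
  have reflect: "{t. - t \<in> {..x}} = {-x..}"
    by auto
  have "std_normal_cdf x = (LBINT t:{t. - t \<in> {..x}}. std_normal_density (- t))"
    unfolding std_normal_cdf_def by (rule set_integral_reflect)
  also have "\<dots> = (LBINT t:{-x..}. std_normal_density t)"
    unfolding reflect by (simp add: std_normal_density_def)
  finally show ?thesis
    by (simp add: measure_std_normal_distribution)
qed

lemma std_normal_measure_symmetric_interval_pos:
  assumes "x < 0"
  shows "0 < measure std_normal_distribution {x<..<-x}"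
proof -
  interpret real_distribution std_normal_distribution
    by (rule real_dist_normal_dist)
  have "{x<..<-x} \<notin> null_sets std_normal_distribution"
  proof
    assume "{x<..<-x} \<in> null_sets std_normal_distribution"
    then have "AE t in lborel. t \<in> {x<..<-x} \<longrightarrow> std_normal_density t = 0"
      by (simp add: null_sets_density_iff)
    then have "AE t in lborel. t \<notin> {x<..<-x}"
      by (auto elim!: eventually_mono simp: std_normal_density_def)
    then have "{x<..<-x} \<in> null_sets lborel"
      by (subst AE_iff_null_sets) auto
    then show False
      using assms by (auto simp: null_sets_def)
  qed
  then show ?thesis
    unfolding zero_less_measure_iff using emeasure_eq_measure[of "{x<..<-x}"]
    by (auto intro: null_setsI)
qed

lemma std_normal_cdf_less_half:
  assumes "x < 0"
  shows "std_normal_cdf x < 1/2"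
proof -
  interpret real_distribution std_normal_distribution
    by (rule real_dist_normal_dist)
  have "measure std_normal_distribution {..<-x}
      = measure std_normal_distribution {..x} + measure std_normal_distribution {x<..<-x}"
  proof -
    have "{..<-x} = {..x} \<union> {x<..<-x}"
      using assms by auto
    moreover have "prob ({..x} \<union> {x<..<-x}) = prob {..x} + prob {x<..<-x}"
      by (rule finite_measure_Union) auto
    ultimately show ?thesis
      by simp
  qed
  moreover have "measure std_normal_distribution {-x..}
      = 1 - measure std_normal_distribution {..<-x}"
  proof -
    have "{-x..} = space std_normal_distribution - {..<-x}"
      by auto
    then show ?thesis
      using prob_compl[of "{..<-x}"] by simp
  qed
  ultimately show ?thesis
    using std_normal_cdf_eq_measure[of x] std_normal_cdf_reflect[of x]
      std_normal_measure_symmetric_interval_pos[OF assms] by linarith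
qed

lemma std_normal_cdf_exceeds:
  assumes "r < 1"
  shows "\<exists>x. r \<le> std_normal_cdf x"
proof -
  interpret real_distribution std_normal_distribution
    by (rule real_dist_normal_dist)
  have "\<forall>\<^sub>F x in at_top. r < cdf std_normal_distribution x"
    using cdf_lim_at_top_prob assms by (rule order_tendstoD)
  then obtain x where "r < cdf std_normal_distribution x"
    by (auto simp: eventually_at_top_linorder)
  then show ?thesis
    by (auto simp: cdf_def std_normal_cdf_eq_measure intro!: less_imp_le)
qed

lemma znorm_nonneg:
  assumes "1/2 \<le> r" "r < 1"
  shows "0 \<le> znorm r"
  unfolding znorm_def
  using std_normal_cdf_exceeds[OF assms(2)] std_normal_cdf_less_half assms(1)
  by (intro quantile_nonneg) force+

lemma convex_on_powr_nonpos:
  assumes "p \<le> 0"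
  shows "convex_on {0<..} (\<lambda>x::real. x powr p)"
proof (rule f''_ge0_imp_convex)
  fix x :: real assume "x \<in> {0<..}"
  then have x: "0 < x" by simp
  show "((\<lambda>x. x powr p) has_real_derivative p * x powr (p - 1)) (at x)"
    using x by (rule has_real_derivative_powr)
  show "((\<lambda>x. p * x powr (p - 1)) has_real_derivative p * ((p - 1) * x powr (p - 1 - 1))) (at x)"
    using x by (intro DERIV_cmult has_real_derivative_powr)
  show "0 \<le> p * ((p - 1) * x powr (p - 1 - 1))"
    using assms by (intro mult_nonpos_nonpos) (auto intro: mult_nonpos_nonneg)
qed simp

lemma Ttx_quantile_convex:
  fixes D eps np tp r :: real
  assumes "0 \<le> D" "0 \<le> eps" "eps < 1" "0 < np" "0 \<le> tp" "0 \<le> znorm r"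
  shows "convex_on {0<..} (Ttx_quantile D eps np tp r)"
proof -
  define A where "A = D * tp / (np * (1 - eps))"
  define B where "B = znorm r * sqrt (D * tp^2 * eps / (np * (1 - eps)^2))"
  have "convex_on {0<..} (\<lambda>Q::real. A * inverse Q + B * Q powr (-1/2))"
    using assms unfolding A_def B_def
    by (intro convex_on_add convex_on_cmul convex_on_powr_nonpos convex_on_inverse) auto
  moreover have "A * inverse Q + B * Q powr (-1/2) = Ttx_quantile D eps np tp r Q"
    if "Q \<in> {0<..}" for Q
  proof -
    have Q: "0 < Q" using that by simp
    have "sqrt (D / (Q * np) * tp^2 * eps / (1 - eps)^2)
        = sqrt (D * tp^2 * eps / (np * (1 - eps)^2)) * sqrt (inverse Q)"
      by (subst real_sqrt_mult[symmetric]) (simp add: field_simps)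
    moreover have "sqrt (inverse Q) = Q powr (-1/2)"
      using Q by (simp add: powr_minus powr_half_sqrt[symmetric] real_sqrt_inverse)
    ultimately show ?thesis
      unfolding Ttx_quantile_def Let_def A_def B_def by (simp add: field_simps)
  qed
  ultimately show ?thesis
    by (rule convex_on_cong)
qed

lemma Tc_quantile_convex:
  fixes D psi kappa Psmax fmax Emax eps eta r :: real
  assumes "0 < D" "0 < psi" "0 < kappa" "0 < Psmax" "0 < fmax" "0 < Emax"
    and "0 \<le> Cconst D eps eta" and "0 < r"
  defines "S \<equiv> {max 1 (Cconst D eps eta / Emax)<..}"
  shows "convex_on S (Tc_quantile D psi kappa Psmax fmax Emax eps eta r)"
proof -
  define C where "C = Cconst D eps eta"
  define K where "K = D * sqrt (D * Psmax / fmax^3) / kappa"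
  define scale where "scale Q = sqrt ((exp (psi * Q) - exp psi) ^ 3 / (Emax - C/Q))" for Q
  obtain c q where q: "0 \<le> q"
    and affine: "\<And>th. 0 < th \<Longrightarrow> gamma_quantile kappa th r = c + q * th"
    using gamma_quantile_affine_in_scale[OF \<open>0 < r\<close>] by blast
  have "convex_on S (\<lambda>Q. c + q * K * scale Q)"
    unfolding S_def C_def[symmetric] scale_def K_def using assms q C_def
    by (intro convex_on_add convex_on_cmul convex_on_compression_scale) (auto simp: convex_on_const)
  moreover have "c + q * K * scale Q = Tc_quantile D psi kappa Psmax fmax Emax eps eta r Q"
    if "Q \<in> S" for Q
  proof -
    have Q: "1 < Q" "C < Emax * Q"
      using that assms(6) by (auto simp: S_def C_def field_simps)
    then have a: "0 < exp (psi * Q) - exp psi" and w: "0 < Emax - C/Q"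
      using assms(2) by (auto simp: field_simps)
    have "(exp (psi * Q) - exp psi) * D / (kappa * fc_star D psi Psmax fmax Emax eps eta Q)
        = K * scale Q"
      unfolding fc_star_def C_def[symmetric] K_def scale_def
      using compression_scale_eq[OF a w] assms by simp
    moreover have "0 < K * scale Q"
      using a w assms by (simp add: K_def scale_def)
    ultimately show ?thesis
      unfolding Tc_quantile_def by (simp add: affine)
  qed
  ultimately show ?thesis
    by (rule convex_on_cong)
qed

theorem theorem1:
  fixes D psi kappa Psmax fmax Emax eps eta np tp r :: real
    and I :: "real set"
  assumes "D > 0" "psi > 0" "kappa > 0" "Psmax > 0" "fmax > 0" "Emax > 0"
    and "0 < eps" "eps < 1" "eta > 0" "np > 0" "tp > 0"
    and "1/2 \<le> r" "r < 1"
    and "is_interval I"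
    and "I \<subseteq> {max 1 (Cconst D eps eta / Emax)<..}"
    and "\<forall>Q\<in>I. 3 * psi^2 * exp psi * Q^2 - 2 * Q * Emax + Cconst D eps eta \<ge> 0"
  shows "convex_on I (\<lambda>Q. Tc_quantile D psi kappa Psmax fmax Emax eps eta r Q
                          + Ttx_quantile D eps np tp r Q)"
proof (rule convex_on_add)
  have I: "convex I"
    using \<open>is_interval I\<close> by (rule is_interval_convex)
  have "0 \<le> Cconst D eps eta"
    using assms by (simp add: Cconst_def)
  with assms show "convex_on I (Tc_quantile D psi kappa Psmax fmax Emax eps eta r)"
    by (intro convex_on_subset[OF Tc_quantile_convex _ I]) auto
  have "I \<subseteq> {0<..}"
    using \<open>I \<subseteq> _\<close> by force
  with assms znorm_nonneg show "convex_on I (Ttx_quantile D eps np tp r)"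
    by (intro convex_on_subset[OF Ttx_quantile_convex _ I]) auto
qed

end
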